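(* Let $\kappa$ be an infinite cardinal and let $E$ be the range of the map $f\colon S\to S$, $f(A,B,C)=(\kappa\setminus A,\ \kappa\setminus(B\cup C),\ \kappa\setminus(A\cup B\cup C))$. Then $E=\{(A,B,A\cap B): A,B\in\mathcal{F}(\kappa)\}$, and the map $(A,B,A\cap B)\mapsto(A,B)$ is an isomorphism from $E$ (with the order of $S$) onto the Boolean lattice $\mathcal{F}(\kappa)\times\mathcal{F}(\kappa)$.
   Context: $\mathcal{F}(\kappa)$ is the Boolean lattice of subsets $X\subseteq\kappa$ that are finite or cofinite. Let $\mu(A,B,C)=(A\cap B)\cup(A\cap C)\cup(B\cap C)$; a triple is balanced if $A\cap B=A\cap C=B\cap C$. $S$ is the set of balanced triples $(A,B,C)\in\mathcal{F}(\kappa)^3$ with $C\setminus\mu(A,B,C)$ finite, ordered componentwise; it is a bounded lattice. *)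

theory Defs
  imports Main
begin

text \<open>kappa is modelled by an infinite type 'a; subsets of kappa are 'a sets.\<close>

definition finco :: "'a set set" where
  "finco = {X. finite X \<or> finite (- X)}"

definition med :: "'a set \<Rightarrow> 'a set \<Rightarrow> 'a set \<Rightarrow> 'a set" where
  "med A B C = (A \<inter> B) \<union> (A \<inter> C) \<union> (B \<inter> C)"

definition balanced :: "'a set \<Rightarrow> 'a set \<Rightarrow> 'a set \<Rightarrow> bool" where
  "balanced A B C \<longleftrightarrow> A \<inter> B = A \<inter> C \<and> A \<inter> C = B \<inter> C"

definition Sset :: "('a set \<times> 'a set \<times> 'a set) set" where
  "Sset = {(A, B, C). A \<in> finco \<and> B \<in> finco \<and> C \<in> finco \<and> balanced A B C
                        \<and> finite (C - med A B C)}"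

definition tle :: "'a set \<times> 'a set \<times> 'a set \<Rightarrow> 'a set \<times> 'a set \<times> 'a set \<Rightarrow> bool" where
  "tle x y \<longleftrightarrow> fst x \<subseteq> fst y \<and> fst (snd x) \<subseteq> fst (snd y) \<and> snd (snd x) \<subseteq> snd (snd y)"

definition ple :: "'a set \<times> 'a set \<Rightarrow> 'a set \<times> 'a set \<Rightarrow> bool" where
  "ple x y \<longleftrightarrow> fst x \<subseteq> fst y \<and> snd x \<subseteq> snd y"

definition fmap :: "'a set \<times> 'a set \<times> 'a set \<Rightarrow> 'a set \<times> 'a set \<times> 'a set" where
  "fmap x = (case x of (A, B, C) \<Rightarrow> (- A, - (B \<union> C), - (A \<union> B \<union> C)))"

definition proj12 :: "'a set \<times> 'a set \<times> 'a set \<Rightarrow> 'a set \<times> 'a set" where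
  "proj12 x = (case x of (A, B, C) \<Rightarrow> (A, B))"

end

theory Submission
  imports Defs
begin

text \<open>Since \<open>-(B \<union> C) \<inter> -A = -(A \<union> B \<union> C)\<close>, every value of \<open>f\<close> has the form \<open>(X, Y, X \<inter> Y)\<close>.
  Conversely \<open>(X, Y, X \<inter> Y) = f (-X, -Y, -X \<inter> -Y)\<close>, and a triple \<open>(A, B, A \<inter> B)\<close> is balanced
  with third component inside its median, so it lies in \<open>S\<close>. On such triples the third
  component is determined by the first two and is monotone in them, so forgetting it is an
  order isomorphism.\<close>

lemma finco_Compl: "X \<in> finco \<Longrightarrow> - X \<in> finco"
  unfolding finco_def by auto

lemma finco_Int: "X \<in> finco \<Longrightarrow> Y \<in> finco \<Longrightarrow> X \<inter> Y \<in> finco"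
  unfolding finco_def by (auto simp: Compl_Int intro: finite_subset)

lemma Int_triple_in_Sset:
  assumes "A \<in> finco" and "B \<in> finco"
  shows "(A, B, A \<inter> B) \<in> Sset"
  using assms by (auto simp: Sset_def balanced_def med_def intro: finco_Int)

lemma fmap_eq: "fmap (A, B, C) = (- A, - (B \<union> C), - A \<inter> - (B \<union> C))"
  by (auto simp: fmap_def)

lemma fmap_Int_triple_Compl: "fmap (- X, - Y, - X \<inter> - Y) = (X, Y, X \<inter> Y)"
  by (auto simp: fmap_def)

lemma image_fmap_Sset: "fmap ` Sset = {(A, B, A \<inter> B) | A B. A \<in> finco \<and> B \<in> finco}"
proof (intro equalityI subsetI)
  fix x assume "x \<in> fmap ` Sset"
  then obtain A B C where "(A, B, C) \<in> Sset" and x: "x = fmap (A, B, C)" by auto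
  then have "- A \<in> finco" and "- (B \<union> C) \<in> finco"
    by (auto simp: Sset_def intro: finco_Compl finco_Int)
  then show "x \<in> {(A, B, A \<inter> B) | A B. A \<in> finco \<and> B \<in> finco}"
    unfolding x fmap_eq by blast
next
  fix x assume "x \<in> {(A, B, A \<inter> B) | A B. A \<in> finco \<and> B \<in> finco}"
  then obtain X Y where x: "x = (X, Y, X \<inter> Y)" and "X \<in> finco" "Y \<in> finco" by auto
  then have "(- X, - Y, - X \<inter> - Y) \<in> Sset"
    by (intro Int_triple_in_Sset finco_Compl)
  then show "x \<in> fmap ` Sset"
    unfolding x by (metis fmap_Int_triple_Compl image_eqI)
qed

lemma bij_betw_proj12_Int_triples:
  "bij_betw proj12 {(A, B, A \<inter> B) | A B. A \<in> F \<and> B \<in> F} (F \<times> F)"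
  unfolding bij_betw_def inj_on_def by (auto simp: proj12_def image_def)

lemma tle_Int_triples_iff: "tle (A, B, A \<inter> B) (A', B', A' \<inter> B') \<longleftrightarrow> ple (A, B) (A', B')"
  by (auto simp: tle_def ple_def)

theorem lemma4p2:
  fixes E :: "('a set \<times> 'a set \<times> 'a set) set"
  assumes "infinite (UNIV :: 'a set)"
    and "E = fmap ` Sset"
  shows "E \<subseteq> Sset
    \<and> E = {(A, B, A \<inter> B) | A B. A \<in> finco \<and> B \<in> finco}
    \<and> bij_betw proj12 E (finco \<times> finco)
    \<and> (\<forall>x \<in> E. \<forall>y \<in> E. tle x y \<longleftrightarrow> ple (proj12 x) (proj12 y))"
proof -
  have E: "E = {(A, B, A \<inter> B) | A B. A \<in> finco \<and> B \<in> finco}"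
    using assms(2) image_fmap_Sset by simp
  have "E \<subseteq> Sset"
    unfolding E using Int_triple_in_Sset by blast
  moreover have "\<forall>x \<in> E. \<forall>y \<in> E. tle x y \<longleftrightarrow> ple (proj12 x) (proj12 y)"
    unfolding E by (auto simp: proj12_def tle_Int_triples_iff)
  ultimately show ?thesis
    using E bij_betw_proj12_Int_triples by blast
qed

end
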